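(* Let $N$ be a nonnegative integer random variable with $E[N]<\infty$ and let $p<1$. Let $\mathbf N=(N_i)_{i\in\mathbb{Z}}$ be i.i.d. with law $N$, and let each bond $(i,i+n)$, $1\le n\le N_i$, be open independently with probability $p$. Let $A$ be the event that there exist $i\ge1$ and $j\ge0$ such that $(-i,j)$ is a bond of $G_{\mathbf N}$ (i.e. $i+j\le N_{-i}$) and it is open. Then $P(A)<1$.
   Context: $G_{\mathbf N}$ is the oriented graph on $\mathbb{Z}$ with bonds $\{(i,i+n):i\in\mathbb{Z},\ 1\le n\le N_i\}$; given $\mathbf N$, bonds are open independently with probability $p$. *)

theory Defs
  imports "HOL-Probability.Probability"
begin

text \<open>Canonical probability space for the model: the first component is the
  i.i.d. family (N_i)_{i in Z} with law D; the second component gives, for every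
  i in Z and n in nat, an independent Bernoulli(p) coin O(i,n). The bond (i,i+n)
  (1 <= n <= N_i) is open iff O(i,n) holds. Given N, the present bonds are
  thus open independently with probability p.\<close>

definition bond_model :: "nat pmf \<Rightarrow> real \<Rightarrow> ((int \<Rightarrow> nat) \<times> (int \<times> nat \<Rightarrow> bool)) measure" where
  "bond_model D p =
     (PiM UNIV (\<lambda>_::int. measure_pmf D)) \<Otimes>\<^sub>M
     (PiM UNIV (\<lambda>_::int \<times> nat. measure_pmf (bernoulli_pmf p)))"

definition is_bond :: "(int \<Rightarrow> nat) \<Rightarrow> int \<Rightarrow> int \<Rightarrow> bool" where
  "is_bond Nv a b \<longleftrightarrow> 1 \<le> b - a \<and> b - a \<le> int (Nv a)"

definition is_open_bond :: "(int \<Rightarrow> nat) \<times> (int \<times> nat \<Rightarrow> bool) \<Rightarrow> int \<Rightarrow> int \<Rightarrow> bool" where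
  "is_open_bond w a b \<longleftrightarrow> is_bond (fst w) a b \<and> snd w (a, nat (b - a))"

definition event_A :: "((int \<Rightarrow> nat) \<times> (int \<times> nat \<Rightarrow> bool)) set" where
  "event_A = {w. \<exists>i::int. \<exists>j::int. i \<ge> 1 \<and> j \<ge> 0 \<and> is_open_bond w (-i) j}"

end

theory Submission
  imports Defs
begin

text \<open>Since E[N] = \<Sum>k P(N > k) < \<infinity>, one can choose K with \<Sum>k\<ge>K P(N > k) small and then M
  with K \<cdot> P(N > M) small. By the union bound, with positive probability N(-(k+1)) \<le> M for k < K
  and N(-(k+1)) \<le> k for k \<ge> K. Then no bond from a site -(k+1) with k \<ge> K reaches 0, and the
  remaining candidates are among the K \<cdot> M bonds (-i, -i+n) with i \<le> K, n \<le> M, which are all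
  closed with probability (1-p)^(K M) > 0, independently of the degrees.\<close>

lemma summable_prob_greater:
  fixes D :: "nat pmf"
  assumes "integrable (measure_pmf D) real"
  shows "summable (\<lambda>k. measure_pmf.prob D {k<..})"
proof (rule summable_suminf_not_top)
  have "(\<Sum>k. ennreal (measure_pmf.prob D {k<..}))
      = (\<Sum>k. emeasure (measure_pmf D) {n \<in> space (measure_pmf D). k < n})"
    by (simp add: measure_pmf.emeasure_eq_measure greaterThan_def)
  also have "\<dots> = (\<integral>\<^sup>+n. of_nat n \<partial>measure_pmf D)"
    by (rule nn_integral_nat_function[symmetric]) simp
  also have "\<dots> < \<top>"
    using assms unfolding integrable_iff_bounded by (simp add: ennreal_of_nat_eq_real_of_nat)
  finally show "(\<Sum>k. ennreal (measure_pmf.prob D {k<..})) \<noteq> \<top>"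
    by simp
qed simp

lemma summable_cutoff_suminf_less_1:
  fixes r :: "nat \<Rightarrow> real"
  assumes r: "summable r" and r_nonneg: "\<And>k. 0 \<le> r k"
  obtains K M where "summable (\<lambda>k. r (if k < K then M else k))"
    and "(\<Sum>k. r (if k < K then M else k)) < 1"
proof -
  obtain K where K: "\<bar>\<Sum>k. r (k + K)\<bar> < 1/2"
    using suminf_exist_split[OF _ r, of "1/2"] by auto
  have "eventually (\<lambda>m. r m < 1 / (2 * (real K + 1))) sequentially"
    using summable_LIMSEQ_zero[OF r] by (rule order_tendstoD) simp
  then obtain M where M: "r M < 1 / (2 * (real K + 1))"
    by (auto simp: eventually_sequentially)
  have "real K * r M \<le> (real K + 1) * r M"
    using r_nonneg[of M] by (simp add: mult_right_mono)
  also have "\<dots> < 1/2"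
    using M by (simp add: field_simps)
  finally have head: "real K * r M < 1/2" .
  define f where "f k = r (if k < K then M else k)" for k
  have shift: "(\<lambda>k. f (k + K)) = (\<lambda>k. r (k + K))"
    by (simp add: f_def)
  have "summable f"
    using summable_iff_shift[of f K] summable_iff_shift[of r K] r by (simp add: shift)
  moreover have "suminf f = (\<Sum>k. r (k + K)) + real K * r M"
    using suminf_split_initial_segment[OF \<open>summable f\<close>, of K] by (simp add: shift f_def)
  ultimately show ?thesis
    using that head K unfolding f_def by fastforce
qed

lemma (in prob_space) prob_INT_ge_1_minus_suminf:
  assumes A: "\<And>k. A k \<in> events" and summable: "summable (\<lambda>k. prob (space M - A k))"
  shows "1 - (\<Sum>k. prob (space M - A k)) \<le> prob (\<Inter>k. A k)"
proof -
  have "prob (space M - (\<Inter>k. A k)) = prob (\<Union>k. space M - A k)"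
    by (intro arg_cong[where f=prob]) blast
  also have "\<dots> \<le> (\<Sum>k. prob (space M - A k))"
    using A summable by (intro finite_measure_subadditive_countably) auto
  finally show ?thesis
    using A by (simp add: prob_compl)
qed

lemma (in prob_space) prob_less_1_if_disjoint:
  assumes "A \<in> events" and "B \<in> events" and "A \<inter> B = {}" and "prob B > 0"
  shows "prob A < 1"
proof -
  have "prob A + prob B = prob (A \<union> B)"
    using assms by (intro finite_measure_Union[symmetric]) auto
  also have "\<dots> \<le> 1"
    by (rule prob_le_1)
  finally show ?thesis
    using \<open>prob B > 0\<close> by simp
qed

lemma sets_PiM_Collect_all_le:
  fixes D :: "nat pmf" and g :: "nat \<Rightarrow> 'i" and t :: "nat \<Rightarrow> nat"
  shows "{f. \<forall>k. f (g k) \<le> t k} \<in> sets (PiM UNIV (\<lambda>_::'i. measure_pmf D))"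
proof -
  have "{f. \<forall>k. f (g k) \<le> t k} = {f \<in> space (PiM UNIV (\<lambda>_::'i. measure_pmf D)). \<forall>k. f (g k) \<le> t k}"
    by (simp add: space_PiM)
  also have "\<dots> \<in> sets (PiM UNIV (\<lambda>_::'i. measure_pmf D))"
    by measurable
  finally show ?thesis .
qed

lemma measure_PiM_all_le_ge:
  fixes D :: "nat pmf" and g :: "nat \<Rightarrow> 'i" and t :: "nat \<Rightarrow> nat"
  assumes "summable (\<lambda>k. measure_pmf.prob D {t k<..})"
  shows "1 - (\<Sum>k. measure_pmf.prob D {t k<..})
    \<le> measure (PiM UNIV (\<lambda>_::'i. measure_pmf D)) {f. \<forall>k. f (g k) \<le> t k}"
proof -
  interpret product_prob_space "\<lambda>_::'i. measure_pmf D" UNIV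
    by unfold_locales
  interpret P: prob_space "PiM UNIV (\<lambda>_::'i. measure_pmf D)"
    by (rule prob_space_PiM) (simp add: prob_space_measure_pmf)
  define A where "A k = {f \<in> space (PiM UNIV (\<lambda>_::'i. measure_pmf D)). f (g k) \<le> t k}" for k
  have A_compl: "space (PiM UNIV (\<lambda>_. measure_pmf D)) - A k
      = {f \<in> space (PiM UNIV (\<lambda>_::'i. measure_pmf D)). f (g k) \<in> {t k<..}}" for k
    by (auto simp: A_def)
  have "P.prob (space (PiM UNIV (\<lambda>_. measure_pmf D)) - A k) = measure_pmf.prob D {t k<..}" for k
    using emeasure_PiM_Collect_single[of "g k" "{t k<..}"]
    by (simp add: A_compl P.emeasure_eq_measure measure_pmf.emeasure_eq_measure)
  moreover have "A k \<in> P.events" for k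
    unfolding A_def by measurable
  moreover have "(\<Inter>k. A k) = {f. \<forall>k. f (g k) \<le> t k}"
    by (auto simp: A_def space_PiM)
  ultimately show ?thesis
    using P.prob_INT_ge_1_minus_suminf[of A] assms by simp
qed

lemma sets_PiM_Collect_all_False:
  assumes "finite J"
  shows "{g. \<forall>j\<in>J. \<not> g j} \<in> sets (PiM UNIV (\<lambda>_::'i. measure_pmf (bernoulli_pmf p)))"
proof -
  have "{g. \<forall>j\<in>J. \<not> g j} = {g \<in> space (PiM UNIV (\<lambda>_::'i. measure_pmf (bernoulli_pmf p))). \<forall>j\<in>J. \<not> g j}"
    by (simp add: space_PiM)
  also have "\<dots> \<in> sets (PiM UNIV (\<lambda>_::'i. measure_pmf (bernoulli_pmf p)))"
    using assms by measurable
  finally show ?thesis .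
qed

lemma measure_PiM_bernoulli_all_False:
  fixes J :: "'i set"
  assumes "finite J" and "0 \<le> p" and "p \<le> 1"
  shows "measure (PiM UNIV (\<lambda>_::'i. measure_pmf (bernoulli_pmf p))) {g. \<forall>j\<in>J. \<not> g j} = (1 - p) ^ card J"
proof -
  interpret product_prob_space "\<lambda>_::'i. measure_pmf (bernoulli_pmf p)" UNIV
    by unfold_locales
  have "{g. \<forall>j\<in>J. \<not> g j} = {g \<in> space (PiM UNIV (\<lambda>_::'i. measure_pmf (bernoulli_pmf p))). \<forall>j\<in>J. g j \<in> {False}}"
    by (auto simp: space_PiM)
  then have "emeasure (PiM UNIV (\<lambda>_::'i. measure_pmf (bernoulli_pmf p))) {g. \<forall>j\<in>J. \<not> g j}
      = (\<Prod>j\<in>J. emeasure (measure_pmf (bernoulli_pmf p)) {False})"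
    using emeasure_PiM_Collect[of J "\<lambda>_. {False}"] assms by simp
  also have "\<dots> = ennreal ((1 - p) ^ card J)"
    using assms by (simp add: emeasure_pmf_single prod_ennreal ennreal_power)
  finally show ?thesis
    using assms by (simp add: measure_def)
qed

lemma (in pair_prob_space) measure_pair_measure_Times:
  assumes "A \<in> sets M1" and "B \<in> sets M2"
  shows "measure (M1 \<Otimes>\<^sub>M M2) (A \<times> B) = measure M1 A * measure M2 B"
  using M2.emeasure_pair_measure_Times[OF assms]
  by (simp add: emeasure_eq_measure M1.emeasure_eq_measure M2.emeasure_eq_measure flip: ennreal_mult)

lemma space_bond_model [simp]: "space (bond_model D p) = UNIV"
  by (simp add: bond_model_def space_pair_measure space_PiM)

lemma is_open_bond_iff:
  "is_open_bond w a b \<longleftrightarrow> 1 \<le> b - a \<and> nat (b - a) \<le> fst w a \<and> snd w (a, nat (b - a))"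
  by (auto simp: is_open_bond_def is_bond_def)

lemma pred_is_open_bond [measurable]: "Measurable.pred (bond_model D p) (\<lambda>w. is_open_bond w a b)"
  unfolding is_open_bond_iff bond_model_def by measurable

lemma event_A_measurable: "event_A \<in> sets (bond_model D p)"
proof -
  have "event_A = {w \<in> space (bond_model D p). \<exists>i j. i \<ge> 1 \<and> j \<ge> 0 \<and> is_open_bond w (-i) j}"
    by (simp add: event_A_def)
  also have "\<dots> \<in> sets (bond_model D p)"
    by measurable
  finally show ?thesis .
qed

lemma prob_space_bond_model: "prob_space (bond_model D p)"
  unfolding bond_model_def by (intro prob_space_pair prob_space_PiM) (simp_all add: prob_space_measure_pmf)

lemma measure_bond_model_Times:
  assumes "A \<in> sets (PiM UNIV (\<lambda>_::int. measure_pmf D))"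
    and "B \<in> sets (PiM UNIV (\<lambda>_::int \<times> nat. measure_pmf (bernoulli_pmf p)))"
  shows "measure (bond_model D p) (A \<times> B)
    = measure (PiM UNIV (\<lambda>_::int. measure_pmf D)) A
      * measure (PiM UNIV (\<lambda>_::int \<times> nat. measure_pmf (bernoulli_pmf p))) B"
proof -
  interpret P1: prob_space "PiM UNIV (\<lambda>_::int. measure_pmf D)"
    by (rule prob_space_PiM) (simp add: prob_space_measure_pmf)
  interpret P2: prob_space "PiM UNIV (\<lambda>_::int \<times> nat. measure_pmf (bernoulli_pmf p))"
    by (rule prob_space_PiM) (simp add: prob_space_measure_pmf)
  interpret P: pair_prob_space "PiM UNIV (\<lambda>_::int. measure_pmf D)"
    "PiM UNIV (\<lambda>_::int \<times> nat. measure_pmf (bernoulli_pmf p))" ..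
  show ?thesis
    unfolding bond_model_def by (rule P.measure_pair_measure_Times[OF assms])
qed

lemma not_event_A_if_bounded_and_closed:
  assumes bounded: "\<forall>k. fst w (-(int k + 1)) \<le> (if k < K then M else k)"
    and closed: "\<forall>j \<in> (\<lambda>(i, n). (- int i, n)) ` ({1..K} \<times> {1..M}). \<not> snd w j"
  shows "w \<notin> event_A"
proof
  assume "w \<in> event_A"
  then obtain i j :: int where "i \<ge> 1" "j \<ge> 0" and open_bond: "is_open_bond w (-i) j"
    by (auto simp: event_A_def)
  define k where "k = nat i - 1"
  define n where "n = nat (j - - i)"
  have "n \<le> fst w (-i)" "snd w (-i, n)"
    using open_bond unfolding is_open_bond_iff n_def by auto
  moreover have "i = int k + 1"
    using \<open>i \<ge> 1\<close> by (simp add: k_def)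
  ultimately have n: "k < n" "n \<le> fst w (-(int k + 1))" "snd w (-(int k + 1), n)"
    using \<open>j \<ge> 0\<close> by (auto simp: n_def)
  show False
  proof (cases "k < K")
    case True
    then have "(-(int k + 1), n) \<in> (\<lambda>(i, n). (- int i, n)) ` ({1..K} \<times> {1..M})"
      using spec[OF bounded, of k] n by (intro image_eqI[of _ _ "(k + 1, n)"]) auto
    then show False
      using closed n by blast
  next
    case False
    then show False
      using spec[OF bounded, of k] n by simp
  qed
qed

theorem mainTheorem7:
  fixes D :: "nat pmf" and p :: real
  assumes "integrable (measure_pmf D) (\<lambda>n. real n)"
    and "0 \<le> p" and "p < 1"
  shows "event_A \<in> sets (bond_model D p) \<and> measure (bond_model D p) event_A < 1"
proof
  show A: "event_A \<in> sets (bond_model D p)"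
    by (rule event_A_measurable)
  obtain K M where summable: "summable (\<lambda>k. measure_pmf.prob D {(if k < K then M else k)<..})"
    and less_1: "(\<Sum>k. measure_pmf.prob D {(if k < K then M else k)<..}) < 1"
    by (rule summable_cutoff_suminf_less_1[OF summable_prob_greater[OF assms(1)]]) simp
  define J where "J = (\<lambda>(i, n). (- int i, n)) ` ({1..K} \<times> {1..M})"
  define E1 where "E1 = {f :: int \<Rightarrow> nat. \<forall>k. f (-(int k + 1)) \<le> (if k < K then M else k)}"
  define E2 where "E2 = {g :: int \<times> nat \<Rightarrow> bool. \<forall>j\<in>J. \<not> g j}"
  have "finite J"
    by (simp add: J_def)
  have E1: "E1 \<in> sets (PiM UNIV (\<lambda>_::int. measure_pmf D))"
    and E2: "E2 \<in> sets (PiM UNIV (\<lambda>_::int \<times> nat. measure_pmf (bernoulli_pmf p)))"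
    unfolding E1_def E2_def by (rule sets_PiM_Collect_all_le, rule sets_PiM_Collect_all_False[OF \<open>finite J\<close>])
  have "measure (PiM UNIV (\<lambda>_::int. measure_pmf D)) E1 > 0"
    using measure_PiM_all_le_ge[OF summable, of "\<lambda>k. -(int k + 1)"] less_1 by (simp add: E1_def)
  moreover have "measure (PiM UNIV (\<lambda>_::int \<times> nat. measure_pmf (bernoulli_pmf p))) E2 > 0"
    using measure_PiM_bernoulli_all_False[OF \<open>finite J\<close>] assms by (simp add: E2_def)
  ultimately have "measure (bond_model D p) (E1 \<times> E2) > 0"
    by (simp add: measure_bond_model_Times[OF E1 E2])
  moreover have "event_A \<inter> E1 \<times> E2 = {}"
  proof -
    have "w \<notin> event_A" if "fst w \<in> E1" and "snd w \<in> E2" for w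
      using that unfolding E1_def E2_def J_def mem_Collect_eq by (rule not_event_A_if_bounded_and_closed)
    then show ?thesis
      by auto
  qed
  moreover have "E1 \<times> E2 \<in> sets (bond_model D p)"
    unfolding bond_model_def using E1 E2 by (rule pair_measureI)
  ultimately show "measure (bond_model D p) event_A < 1"
    using A by (intro prob_space.prob_less_1_if_disjoint[OF prob_space_bond_model])
qed

end
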